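(* Let $\mathcal{M}$ be a saturated model of Presburger arithmetic and $\mathcal{M}_0\preceq\mathcal{M}$ small. Let $\phi(x,a)$, with $x$ a single variable and $a\in\mathcal{M}^k$, define either a single point or a bounded $1$-cell in $\mathcal{M}$, and suppose $\phi(\mathcal{M},a)\cap\mathcal{M}_0=\emptyset$. Then there is $a'\in\mathcal{M}^k$ such that $\mathrm{tp}(a/\mathcal{M}_0)=\mathrm{tp}(a'/\mathcal{M}_0)$ and $\phi(\mathcal{M},a)\cap\phi(\mathcal{M},a')=\emptyset$.
   Context: Presburger arithmetic is $\mathrm{Th}(\mathbb{Z},+,-,<,0,1,\{\equiv_n\}_n)$. A bounded $1$-cell is an infinite set of the form $\{x\in\mathcal{M}:\alpha\le x\le\beta,\ x\equiv_N c\}$ with $\alpha,\beta\in\mathcal{M}$ and $0\le c<N$ integers. *)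

theory Defs
  imports Main
begin

datatype trm = Var nat | Zero | One | Plus trm trm | Minus trm trm

datatype fm = FTrue | FFalse | Eq trm trm | Less trm trm | Cong nat trm trm
  | Not fm | And fm fm | Or fm fm | Imp fm fm | Ex nat fm | All nat fm

record 'a pstruct =
  pplus :: "'a \<Rightarrow> 'a \<Rightarrow> 'a"
  pminus :: "'a \<Rightarrow> 'a \<Rightarrow> 'a"
  pless :: "'a \<Rightarrow> 'a \<Rightarrow> bool"
  pzero :: 'a
  pone :: 'a
  pcong :: "nat \<Rightarrow> 'a \<Rightarrow> 'a \<Rightarrow> bool"

fun tval :: "'a pstruct \<Rightarrow> (nat \<Rightarrow> 'a) \<Rightarrow> trm \<Rightarrow> 'a" where
  "tval M e (Var n) = e n"
| "tval M e Zero = pzero M"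
| "tval M e One = pone M"
| "tval M e (Plus s t) = pplus M (tval M e s) (tval M e t)"
| "tval M e (Minus s t) = pminus M (tval M e s) (tval M e t)"

text \<open>Satisfaction, with quantifiers ranging over the domain D
  (D = UNIV for the model itself; D = a substructure for relativised satisfaction).\<close>
fun sat :: "'a pstruct \<Rightarrow> 'a set \<Rightarrow> (nat \<Rightarrow> 'a) \<Rightarrow> fm \<Rightarrow> bool" where
  "sat M D e FTrue = True"
| "sat M D e FFalse = False"
| "sat M D e (Eq s t) = (tval M e s = tval M e t)"
| "sat M D e (Less s t) = pless M (tval M e s) (tval M e t)"
| "sat M D e (Cong n s t) = pcong M n (tval M e s) (tval M e t)"
| "sat M D e (Not p) = (\<not> sat M D e p)"
| "sat M D e (And p q) = (sat M D e p \<and> sat M D e q)"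
| "sat M D e (Or p q) = (sat M D e p \<or> sat M D e q)"
| "sat M D e (Imp p q) = (sat M D e p \<longrightarrow> sat M D e q)"
| "sat M D e (Ex x p) = (\<exists>b\<in>D. sat M D (e(x := b)) p)"
| "sat M D e (All x p) = (\<forall>b\<in>D. sat M D (e(x := b)) p)"

fun fvt :: "trm \<Rightarrow> nat set" where
  "fvt (Var n) = {n}"
| "fvt Zero = {}"
| "fvt One = {}"
| "fvt (Plus s t) = fvt s \<union> fvt t"
| "fvt (Minus s t) = fvt s \<union> fvt t"

fun fv :: "fm \<Rightarrow> nat set" where
  "fv FTrue = {}"
| "fv FFalse = {}"
| "fv (Eq s t) = fvt s \<union> fvt t"
| "fv (Less s t) = fvt s \<union> fvt t"
| "fv (Cong n s t) = fvt s \<union> fvt t"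
| "fv (Not p) = fv p"
| "fv (And p q) = fv p \<union> fv q"
| "fv (Or p q) = fv p \<union> fv q"
| "fv (Imp p q) = fv p \<union> fv q"
| "fv (Ex x p) = fv p - {x}"
| "fv (All x p) = fv p - {x}"

definition Zstr :: "int pstruct" where
  "Zstr = \<lparr>pplus = (+), pminus = (-), pless = (<), pzero = 0, pone = 1,
           pcong = (\<lambda>n x y. int n dvd (x - y))\<rparr>"

text \<open>M is a model of Presburger arithmetic Th(Z,...): elementarily equivalent to Zstr.\<close>
definition presburger_model :: "'a pstruct \<Rightarrow> bool" where
  "presburger_model M \<longleftrightarrow>
     (\<forall>\<phi>. fv \<phi> = {} \<longrightarrow> (sat M UNIV (\<lambda>_. undefined) \<phi> \<longleftrightarrow> sat Zstr UNIV (\<lambda>_. 0) \<phi>))"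

definition elem_sub :: "'a pstruct \<Rightarrow> 'a set \<Rightarrow> bool" where
  "elem_sub M S \<longleftrightarrow> S \<noteq> {} \<and> pzero M \<in> S \<and> pone M \<in> S \<and>
     (\<forall>x\<in>S. \<forall>y\<in>S. pplus M x y \<in> S \<and> pminus M x y \<in> S) \<and>
     (\<forall>\<phi> e. range e \<subseteq> S \<longrightarrow> (sat M S e \<phi> \<longleftrightarrow> sat M UNIV e \<phi>))"

definition small_in :: "'a set \<Rightarrow> bool" where
  "small_in A \<longleftrightarrow> (card_of A, card_of (UNIV :: 'a set)) \<in> ordLess"

text \<open>A partial type is a set of pairs (formula, assignment of the parameters).\<close>
definition saturated :: "'a pstruct \<Rightarrow> bool" where
  "saturated M \<longleftrightarrow>
    (\<forall>(A :: 'a set) (\<Sigma> :: (fm \<times> (nat \<Rightarrow> 'a)) set).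
       small_in A \<and>
       (\<forall>(\<phi>, e) \<in> \<Sigma>. \<forall>n \<in> fv \<phi> - {0}. e n \<in> A) \<and>
       (\<forall>F \<subseteq> \<Sigma>. finite F \<longrightarrow> (\<exists>b. \<forall>(\<phi>, e) \<in> F. sat M UNIV (e(0 := b)) \<phi>))
       \<longrightarrow> (\<exists>b. \<forall>(\<phi>, e) \<in> \<Sigma>. sat M UNIV (e(0 := b)) \<phi>))"

text \<open>tp(a/S) = tp(a'/S) for the k-tuples a = (a 1, ..., a k), a' = (a' 1, ..., a' k).\<close>
definition same_type :: "'a pstruct \<Rightarrow> 'a set \<Rightarrow> nat \<Rightarrow> (nat \<Rightarrow> 'a) \<Rightarrow> (nat \<Rightarrow> 'a) \<Rightarrow> bool" where
  "same_type M S k a a' \<longleftrightarrow>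
    (\<forall>\<psi> e. (\<forall>n \<in> fv \<psi> - {1..k}. e n \<in> S) \<longrightarrow>
       (sat M UNIV (override_on e a {1..k}) \<psi> \<longleftrightarrow> sat M UNIV (override_on e a' {1..k}) \<psi>))"

text \<open>The set phi(M,a) defined with x = Var 0 and parameters a 1, ..., a k.\<close>
definition defset :: "'a pstruct \<Rightarrow> fm \<Rightarrow> (nat \<Rightarrow> 'a) \<Rightarrow> 'a set" where
  "defset M \<phi> a = {b. sat M UNIV (a(0 := b)) \<phi>}"

definition num_elem :: "'a pstruct \<Rightarrow> nat \<Rightarrow> 'a" where
  "num_elem M c = (pplus M (pone M) ^^ c) (pzero M)"

definition ple :: "'a pstruct \<Rightarrow> 'a \<Rightarrow> 'a \<Rightarrow> bool" where
  "ple M x y \<longleftrightarrow> pless M x y \<or> x = y"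

definition bounded_1cell :: "'a pstruct \<Rightarrow> 'a set \<Rightarrow> bool" where
  "bounded_1cell M X \<longleftrightarrow> infinite X \<and>
     (\<exists>\<alpha> \<beta> (N::nat) (c::nat). c < N \<and>
        X = {x. ple M \<alpha> x \<and> ple M x \<beta> \<and> pcong M N x (num_elem M c)})"

end

theory Submission
  imports Defs "HOL-Combinatorics.Transposition"
begin

text \<open>Let \<open>X = \<phi>(M,a)\<close>. By saturation (lifted from 1-types to \<open>k\<close>-types one variable at a time) it
  suffices to realise, for each finite part \<open>\<Psi>(x)\<close> of \<open>tp(a/S)\<close>, the formula \<open>\<Psi>(x) \<and> \<phi>(M,x) \<inter> X = \<emptyset>\<close>.
  Write \<open>X = {x. \<alpha> \<le> x \<le> \<beta>, C(x)}\<close>. If every realisation \<open>b\<close> of \<open>\<Psi>\<close> had \<open>\<phi>(M,b)\<close> meeting \<open>X\<close>,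
  the \<open>S\<close>-definable set of \<open>z\<close> with \<open>C(z)\<close> that bound some such \<open>\<phi>(M,b)\<close> from above would contain
  \<open>max X\<close> and be bounded below by \<open>\<alpha>\<close>. As in \<open>\<int>\<close>, it has a least element; this element is
  \<open>S\<close>-definable, hence in \<open>S\<close>, and it lies in \<open>X\<close>, contradicting \<open>X \<inter> S = \<emptyset>\<close>.\<close>

section \<open>Renaming and coincidence\<close>

fun rename_trm :: "(nat \<Rightarrow> nat) \<Rightarrow> trm \<Rightarrow> trm" where
  "rename_trm s (Var n) = Var (s n)"
| "rename_trm s Zero = Zero"
| "rename_trm s One = One"
| "rename_trm s (Plus t u) = Plus (rename_trm s t) (rename_trm s u)"
| "rename_trm s (Minus t u) = Minus (rename_trm s t) (rename_trm s u)"

fun rename :: "(nat \<Rightarrow> nat) \<Rightarrow> fm \<Rightarrow> fm" where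
  "rename s FTrue = FTrue"
| "rename s FFalse = FFalse"
| "rename s (Eq t u) = Eq (rename_trm s t) (rename_trm s u)"
| "rename s (Less t u) = Less (rename_trm s t) (rename_trm s u)"
| "rename s (Cong n t u) = Cong n (rename_trm s t) (rename_trm s u)"
| "rename s (Not p) = Not (rename s p)"
| "rename s (And p q) = And (rename s p) (rename s q)"
| "rename s (Or p q) = Or (rename s p) (rename s q)"
| "rename s (Imp p q) = Imp (rename s p) (rename s q)"
| "rename s (Ex x p) = Ex (s x) (rename s p)"
| "rename s (All x p) = All (s x) (rename s p)"

lemma tval_rename_trm: "tval M e (rename_trm s t) = tval M (e \<circ> s) t"
  by (induction t) auto

lemma fvt_rename_trm: "fvt (rename_trm s t) = s ` fvt t"
  by (induction t) auto

lemma fun_upd_comp_inj: "inj s \<Longrightarrow> e(s x := b) \<circ> s = (e \<circ> s)(x := b)"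
  by (auto simp: fun_eq_iff inj_eq)

lemma sat_rename: "inj s \<Longrightarrow> sat M D e (rename s p) = sat M D (e \<circ> s) p"
  by (induction p arbitrary: e) (simp_all add: tval_rename_trm fun_upd_comp_inj)

lemma fv_rename: "inj s \<Longrightarrow> fv (rename s p) = s ` fv p"
  by (induction p) (auto simp: fvt_rename_trm image_Un image_set_diff)

lemma tval_cong: "(\<And>n. n \<in> fvt t \<Longrightarrow> e n = e' n) \<Longrightarrow> tval M e t = tval M e' t"
  by (induction t) auto

lemma sat_cong: "(\<And>n. n \<in> fv p \<Longrightarrow> e n = e' n) \<Longrightarrow> sat M D e p = sat M D e' p"
proof (induction p arbitrary: e e')
  case (Eq s t)
  then show ?case using tval_cong[of s e e' M] tval_cong[of t e e' M] by auto
next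
  case (Less s t)
  then show ?case using tval_cong[of s e e' M] tval_cong[of t e e' M] by auto
next
  case (Cong n s t)
  then show ?case using tval_cong[of s e e' M] tval_cong[of t e e' M] by auto
next
  case (Not p)
  then show ?case by (metis fv.simps(6) sat.simps(6))
next
  case (And p q)
  then show ?case by (metis UnCI fv.simps(7) sat.simps(7))
next
  case (Or p q)
  then show ?case by (metis UnCI fv.simps(8) sat.simps(8))
next
  case (Imp p q)
  then show ?case by (metis UnCI fv.simps(9) sat.simps(9))
next
  case (Ex x p)
  have "sat M D (e(x := b)) p = sat M D (e'(x := b)) p" for b
    by (rule Ex.IH) (use Ex.prems in auto)
  then show ?case by simp
next
  case (All x p)
  have "sat M D (e(x := b)) p = sat M D (e'(x := b)) p" for b
    by (rule All.IH) (use All.prems in auto)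
  then show ?case by simp
qed simp_all

lemma finite_fv: "finite (fv p)"
proof -
  have "finite (fvt t)" for t by (induction t) auto
  then show ?thesis by (induction p) auto
qed

fun Exs :: "nat list \<Rightarrow> fm \<Rightarrow> fm" where
  "Exs [] p = p"
| "Exs (x # xs) p = Ex x (Exs xs p)"

fun Alls :: "nat list \<Rightarrow> fm \<Rightarrow> fm" where
  "Alls [] p = p"
| "Alls (x # xs) p = All x (Alls xs p)"

lemma fv_Exs: "fv (Exs xs p) = fv p - set xs"
  by (induction xs) auto

lemma fv_Alls: "fv (Alls xs p) = fv p - set xs"
  by (induction xs) auto

lemma override_on_insert_upd:
  "override_on (e(x := c)) b X = override_on e (b(x := if x \<in> X then b x else c)) (insert x X)"
  by (auto simp: override_on_def fun_eq_iff)

lemma ex_override_on_insert: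
  "(\<exists>c b. P (override_on (e(x := c)) b X)) \<longleftrightarrow> (\<exists>b. P (override_on e b (insert x X)))"
  by (metis override_on_insert' override_on_insert_upd)

lemma all_override_on_insert:
  "(\<forall>c b. P (override_on (e(x := c)) b X)) \<longleftrightarrow> (\<forall>b. P (override_on e b (insert x X)))"
  by (metis override_on_insert' override_on_insert_upd)

lemma sat_Exs: "sat M UNIV e (Exs xs p) \<longleftrightarrow> (\<exists>b. sat M UNIV (override_on e b (set xs)) p)"
proof (induction xs arbitrary: e)
  case (Cons x xs)
  have "sat M UNIV e (Exs (x # xs) p) \<longleftrightarrow>
      (\<exists>c b. sat M UNIV (override_on (e(x := c)) b (set xs)) p)"
    by (simp del: fun_upd_apply add: Cons.IH)
  also have "\<dots> \<longleftrightarrow> (\<exists>b. sat M UNIV (override_on e b (set (x # xs))) p)"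
    using ex_override_on_insert by simp
  finally show ?case .
qed simp

lemma sat_Alls: "sat M UNIV e (Alls xs p) \<longleftrightarrow> (\<forall>b. sat M UNIV (override_on e b (set xs)) p)"
proof (induction xs arbitrary: e)
  case (Cons x xs)
  have "sat M UNIV e (Alls (x # xs) p) \<longleftrightarrow>
      (\<forall>c b. sat M UNIV (override_on (e(x := c)) b (set xs)) p)"
    by (simp del: fun_upd_apply add: Cons.IH)
  also have "\<dots> \<longleftrightarrow> (\<forall>b. sat M UNIV (override_on e b (set (x # xs))) p)"
    using all_override_on_insert by simp
  finally show ?case .
qed simp

section \<open>Transfer from \<open>\<int>\<close>\<close>

text \<open>Transfer along the universal closure, a true sentence of \<open>\<int>\<close>.\<close>
lemma presburger_model_valid:
  assumes "presburger_model M" and valid: "\<And>g. sat Zstr UNIV g \<psi>"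
  shows "sat M UNIV e \<psi>"
proof -
  define vs where "vs = sorted_list_of_set (fv \<psi>)"
  have vs: "set vs = fv \<psi>"
    using finite_fv by (simp add: vs_def)
  have "sat Zstr UNIV (\<lambda>_. 0) (Alls vs \<psi>)"
    using valid by (simp add: sat_Alls)
  then have "sat M UNIV (\<lambda>_. undefined) (Alls vs \<psi>)"
    using assms(1) by (simp add: presburger_model_def fv_Alls vs)
  then have "sat M UNIV (override_on (\<lambda>_. undefined) e (fv \<psi>)) \<psi>"
    by (simp add: sat_Alls vs)
  then show ?thesis
    by (rule iffD1[OF sat_cong, rotated]) simp
qed

definition Le :: "trm \<Rightarrow> trm \<Rightarrow> fm" where
  "Le s t = Or (Less s t) (Eq s t)"

lemma sat_Le [simp]: "sat M D e (Le s t) = ple M (tval M e s) (tval M e t)"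
  by (simp add: Le_def ple_def)

lemma fv_Le [simp]: "fv (Le s t) = fvt s \<union> fvt t"
  by (simp add: Le_def)

lemma ple_Zstr [simp]: "ple Zstr x y \<longleftrightarrow> x \<le> y"
  by (auto simp: ple_def Zstr_def)

lemma ple_refl: "ple M x x"
  by (simp add: ple_def)

lemma ple_trans:
  assumes "presburger_model M" "ple M x y" "ple M y z"
  shows "ple M x z"
proof -
  have "sat M UNIV ((\<lambda>_. x)(2 := y, 3 := z))
      (Imp (And (Le (Var 1) (Var 2)) (Le (Var 2) (Var 3))) (Le (Var 1) (Var 3)))"
    by (rule presburger_model_valid[OF assms(1)]) auto
  then show ?thesis
    using assms(2,3) by simp
qed

lemma ple_antisym:
  assumes "presburger_model M" "ple M x y" "ple M y x"
  shows "x = y"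
proof -
  have "sat M UNIV ((\<lambda>_. x)(2 := y))
      (Imp (And (Le (Var 1) (Var 2)) (Le (Var 2) (Var 1))) (Eq (Var 1) (Var 2)))"
    by (rule presburger_model_valid[OF assms(1)]) auto
  then show ?thesis
    using assms(2,3) by simp
qed

lemma num_elem_Suc: "num_elem M (Suc n) = pplus M (pone M) (num_elem M n)"
  by (simp add: num_elem_def)

lemma presburger_model_infinite:
  assumes "presburger_model (M :: 'a pstruct)"
  shows "infinite (UNIV :: 'a set)"
proof -
  have succ: "pless M x (pplus M (pone M) x)" for x
    using presburger_model_valid[OF assms, of "Less (Var 0) (Plus One (Var 0))" "\<lambda>_. x"]
    by (simp add: Zstr_def)
  have irrefl: "\<not> pless M x x" for x
    using presburger_model_valid[OF assms, of "Not (Less (Var 0) (Var 0))" "\<lambda>_. x"]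
    by (simp add: Zstr_def)
  have trans: "pless M x z" if "pless M x y" "pless M y z" for x y z
    using presburger_model_valid[OF assms,
        of "Imp (And (Less (Var 1) (Var 2)) (Less (Var 2) (Var 3))) (Less (Var 1) (Var 3))"
          "(\<lambda>_. x)(2 := y, 3 := z)"] that
    by (simp add: Zstr_def)
  have increasing: "pless M (num_elem M m) (num_elem M (Suc (m + d)))" for m d
  proof (induction d)
    case (Suc d)
    then show ?case
      using succ trans by (metis add_Suc_right num_elem_Suc)
  qed (simp add: succ num_elem_def)
  have "inj (num_elem M)"
  proof (rule injI)
    fix m n
    assume "num_elem M m = num_elem M n"
    moreover have "pless M (num_elem M i) (num_elem M j)" if "i < j" for i j
      using increasing[of i "j - Suc i"] that by simp
    ultimately show "m = n"
      using irrefl by (metis linorder_neqE_nat)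
  qed
  then show ?thesis
    using infinite_iff_countable_subset by blast
qed

section \<open>Definable extrema\<close>

definition fresh_var :: "nat \<Rightarrow> fm \<Rightarrow> nat" where
  "fresh_var k p = Suc (k + Max (insert 0 (fv p)))"

lemma fresh_var_notin: "fresh_var k p \<notin> fv p"
  using Max_ge[OF finite_insert[THEN iffD2, OF finite_fv], of _ 0 p]
  by (fastforce simp: fresh_var_def)

lemma fresh_var_gt: "k < fresh_var k p"
  by (simp add: fresh_var_def)

definition ple_dir :: "'a pstruct \<Rightarrow> bool \<Rightarrow> 'a \<Rightarrow> 'a \<Rightarrow> bool" where
  "ple_dir M d x y \<longleftrightarrow> (if d then ple M x y else ple M y x)"

definition Le_dir :: "bool \<Rightarrow> trm \<Rightarrow> trm \<Rightarrow> fm" where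
  "Le_dir d s t = (if d then Le s t else Le t s)"

lemma sat_Le_dir [simp]: "sat M D e (Le_dir d s t) \<longleftrightarrow> ple_dir M d (tval M e s) (tval M e t)"
  by (simp add: Le_dir_def ple_dir_def)

lemma fv_Le_dir [simp]: "fv (Le_dir d s t) = fvt s \<union> fvt t"
  by (auto simp: Le_dir_def)

definition extremum_fm :: "bool \<Rightarrow> fm \<Rightarrow> fm" where
  "extremum_fm d \<theta> = (let w = fresh_var 0 \<theta> in
     And \<theta> (All w (Imp (rename (transpose 0 w) \<theta>) (Le_dir d (Var 0) (Var w)))))"

lemma sat_extremum_fm:
  "sat M UNIV e (extremum_fm d \<theta>) \<longleftrightarrow>
     sat M UNIV e \<theta> \<and> (\<forall>z. sat M UNIV (e(0 := z)) \<theta> \<longrightarrow> ple_dir M d (e 0) z)"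
proof -
  define w where "w = fresh_var 0 \<theta>"
  have w: "w \<noteq> 0" "w \<notin> fv \<theta>"
    using fresh_var_gt fresh_var_notin by (auto simp: w_def)
  have "sat M UNIV (e(w := z) \<circ> transpose 0 w) \<theta> \<longleftrightarrow> sat M UNIV (e(0 := z)) \<theta>" for z
    by (rule sat_cong) (use w in \<open>auto simp: transpose_def\<close>)
  then show ?thesis
    using w by (simp add: extremum_fm_def Let_def w_def[symmetric] sat_rename inj_transpose)
qed

lemma fv_extremum_fm: "fv (extremum_fm d \<theta>) \<subseteq> insert 0 (fv \<theta>)"
  using fresh_var_gt[of 0 \<theta>]
  by (auto simp: extremum_fm_def Let_def fv_rename inj_transpose transpose_def)

lemma int_least:
  fixes T :: "int set"
  assumes "z \<in> T" and "\<forall>x\<in>T. l \<le> x"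
  shows "\<exists>m\<in>T. \<forall>x\<in>T. m \<le> x"
proof -
  define n where "n = (LEAST n. l + int n \<in> T)"
  have shifted: "l + int (nat (x - l)) \<in> T" if "x \<in> T" for x
    using that assms(2) by simp
  have "l + int n \<in> T"
    unfolding n_def by (rule LeastI, rule shifted[OF assms(1)])
  moreover have "n \<le> nat (x - l)" if "x \<in> T" for x
    unfolding n_def by (rule Least_le, rule shifted[OF that])
  ultimately show ?thesis
    using assms(2) by (intro bexI[of _ "l + int n"]) fastforce+
qed

lemma int_extremum:
  fixes T :: "int set"
  assumes "z \<in> T" and "\<forall>x\<in>T. ple_dir Zstr d l x"
  shows "\<exists>m\<in>T. \<forall>x\<in>T. ple_dir Zstr d m x"
proof (cases d)
  case True
  then show ?thesis
    using int_least[of z T l] assms by (simp add: ple_dir_def)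
next
  case False
  have "\<exists>m\<in>uminus ` T. \<forall>x\<in>uminus ` T. m \<le> x"
    by (rule int_least[of "- z" _ "- l"]) (use assms False in \<open>auto simp: ple_dir_def\<close>)
  then show ?thesis
    using False by (force simp: ple_dir_def)
qed

text \<open>In \<open>\<int>\<close> this holds uniformly in the parameters, so it transfers.\<close>
lemma definable_extremum_exists:
  assumes "presburger_model M"
    and "sat M UNIV (e(0 := z)) \<theta>"
    and "\<forall>z. sat M UNIV (e(0 := z)) \<theta> \<longrightarrow> ple_dir M d l z"
  shows "\<exists>z. sat M UNIV (e(0 := z)) (extremum_fm d \<theta>)"
proof -
  define w where "w = fresh_var 0 \<theta>"
  have w: "w \<noteq> 0" "w \<notin> fv \<theta>"
    using fresh_var_gt fresh_var_notin by (auto simp: w_def)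
  define I where "I = Imp (And (Ex 0 \<theta>) (Ex w (All 0 (Imp \<theta> (Le_dir d (Var w) (Var 0))))))
      (Ex 0 (extremum_fm d \<theta>))"
  have sat_I: "sat N UNIV g I \<longleftrightarrow>
      ((\<exists>z. sat N UNIV (g(0 := z)) \<theta>) \<and> (\<exists>l. \<forall>z. sat N UNIV (g(0 := z)) \<theta> \<longrightarrow> ple_dir N d l z)
        \<longrightarrow> (\<exists>m. sat N UNIV (g(0 := m)) \<theta> \<and> (\<forall>z. sat N UNIV (g(0 := z)) \<theta> \<longrightarrow> ple_dir N d m z)))"
    for N :: "'b pstruct" and g
  proof -
    have "sat N UNIV (g(w := l, 0 := z)) \<theta> \<longleftrightarrow> sat N UNIV (g(0 := z)) \<theta>" for l z
      by (rule sat_cong) (use w in auto)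
    then show ?thesis
      using w(1) by (simp add: I_def sat_extremum_fm)
  qed
  have "sat Zstr UNIV g I" for g
    using int_extremum[of _ "{z. sat Zstr UNIV (g(0 := z)) \<theta>}" d] by (auto simp: sat_I)
  then have "sat M UNIV e I"
    by (rule presburger_model_valid[OF assms(1)])
  then show ?thesis
    using assms(2,3) by (auto simp: sat_I sat_extremum_fm)
qed

section \<open>Types with parameters\<close>

text \<open>A set of formulas in the variables \<open>1..k\<close>, each paired with an assignment that supplies its
  remaining (parameter) variables, as in \<open>same_type\<close>.\<close>
definition params_in :: "'a set \<Rightarrow> nat \<Rightarrow> (fm \<times> (nat \<Rightarrow> 'a)) set \<Rightarrow> bool" where
  "params_in A k \<Gamma> \<longleftrightarrow> (\<forall>(\<psi>, e) \<in> \<Gamma>. \<forall>n \<in> fv \<psi> - {1..k}. e n \<in> A)"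

definition realises :: "'a pstruct \<Rightarrow> nat \<Rightarrow> (nat \<Rightarrow> 'a) \<Rightarrow> (fm \<times> (nat \<Rightarrow> 'a)) set \<Rightarrow> bool" where
  "realises M k b \<Gamma> \<longleftrightarrow> (\<forall>(\<psi>, e) \<in> \<Gamma>. sat M UNIV (override_on e b {1..k}) \<psi>)"

definition finitely_realisable :: "'a pstruct \<Rightarrow> nat \<Rightarrow> (fm \<times> (nat \<Rightarrow> 'a)) set \<Rightarrow> bool" where
  "finitely_realisable M k \<Gamma> \<longleftrightarrow> (\<forall>F \<subseteq> \<Gamma>. finite F \<longrightarrow> (\<exists>b. realises M k b F))"

lemma realises_mono: "realises M k b \<Gamma> \<Longrightarrow> F \<subseteq> \<Gamma> \<Longrightarrow> realises M k b F"
  by (auto simp: realises_def)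

lemma realises_empty [simp]: "realises M k b {}"
  by (simp add: realises_def)

lemma realises_insert [simp]:
  "realises M k b (insert (\<psi>, e) \<Gamma>) \<longleftrightarrow> sat M UNIV (override_on e b {1..k}) \<psi> \<and> realises M k b \<Gamma>"
  by (simp add: realises_def)

lemma params_in_mono: "params_in A k \<Gamma> \<Longrightarrow> F \<subseteq> \<Gamma> \<Longrightarrow> params_in A k F"
  unfolding params_in_def by blast

definition split_var :: "nat \<Rightarrow> bool \<Rightarrow> nat \<Rightarrow> nat" where
  "split_var k i n = (if n \<in> {1..k} then n else Suc (k + 2 * n + of_bool i))"

definition interleave :: "nat \<Rightarrow> (nat \<Rightarrow> 'a) \<Rightarrow> (nat \<Rightarrow> 'a) \<Rightarrow> nat \<Rightarrow> 'a" where
  "interleave k e E n = (if n \<le> k then e n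
     else if even (n - Suc k) then e ((n - Suc k) div 2) else E ((n - Suc k) div 2))"

text \<open>Variables \<open>1..k\<close> are shared; the parameter variables of the head are moved to the even, those
  of the tail to the odd positions above \<open>k\<close>, where \<open>interleave\<close> places the two assignments.\<close>
fun conj_list :: "nat \<Rightarrow> (fm \<times> (nat \<Rightarrow> 'a)) list \<Rightarrow> fm \<times> (nat \<Rightarrow> 'a)" where
  "conj_list k [] = (FTrue, \<lambda>_. undefined)"
| "conj_list k ((\<psi>, e) # ps) =
     (And (rename (split_var k False) \<psi>) (rename (split_var k True) (fst (conj_list k ps))),
      interleave k e (snd (conj_list k ps)))"

lemma inj_split_var: "inj (split_var k i)"
  by (auto simp: inj_def split_var_def)

lemma split_var_nonzero: "split_var k i n \<noteq> 0"
  by (simp add: split_var_def)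

lemma interleave_split_var:
  assumes "n \<notin> {1..k}"
  shows "interleave k e E (split_var k i n) = (if i then E n else e n)"
proof -
  have "split_var k i n = Suc (k + 2 * n + of_bool i)"
    using assms by (simp add: split_var_def)
  then show ?thesis
    by (cases i) (simp_all add: interleave_def)
qed

lemma override_interleave_split_var:
  "override_on (interleave k e E) b {1..k} \<circ> split_var k i = override_on (if i then E else e) b {1..k}"
proof
  fix n
  show "(override_on (interleave k e E) b {1..k} \<circ> split_var k i) n =
      override_on (if i then E else e) b {1..k} n"
  proof (cases "n \<in> {1..k}")
    case True
    then show ?thesis by (simp add: split_var_def)
  next
    case False
    then have "split_var k i n \<notin> {1..k}"
      by (auto simp: split_var_def)
    then show ?thesis
      using False by (simp add: interleave_split_var)
  qed
qed

lemma realises_conj_list: "realises M k b {conj_list k ps} \<longleftrightarrow> realises M k b (set ps)"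
  by (induction k ps rule: conj_list.induct)
     (auto simp del: One_nat_def simp: sat_rename inj_split_var override_interleave_split_var realises_def)

lemma fv_conj_list_Cons:
  "fv (fst (conj_list k ((\<psi>, e) # ps))) =
     split_var k False ` fv \<psi> \<union> split_var k True ` fv (fst (conj_list k ps))"
  by (simp add: fv_rename inj_split_var)

lemma zero_notin_fv_conj_list: "0 \<notin> fv (fst (conj_list k ps))"
  by (induction k ps rule: conj_list.induct) (auto simp: fv_rename inj_split_var split_var_nonzero)

lemma params_in_conj_list: "params_in A k (set ps) \<Longrightarrow> params_in A k {conj_list k ps}"
proof (induction k ps rule: conj_list.induct)
  case (2 k \<psi> e ps)
  have "interleave k e (snd (conj_list k ps)) n \<in> A"
    if "n \<in> fv (fst (conj_list k ((\<psi>, e) # ps))) - {1..k}" for n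
  proof -
    from that obtain i m where m: "n = split_var k i m"
      "\<not> i \<and> m \<in> fv \<psi> \<or> i \<and> m \<in> fv (fst (conj_list k ps))"
      unfolding fv_conj_list_Cons by blast
    moreover have "m \<notin> {1..k}"
      using that m(1) by (auto simp: split_var_def)
    ultimately show ?thesis
      using "2" by (auto simp: params_in_def interleave_split_var)
  qed
  then show ?case
    by (simp add: params_in_def)
qed (simp add: params_in_def)

section \<open>Saturation for tuples\<close>

lemma small_insert:
  assumes "infinite (UNIV :: 'a set)" and "small_in (A :: 'a set)"
  shows "small_in (insert c A)"
proof -
  have "(card_of {c}, card_of (UNIV :: 'a set)) \<in> ordLess"
    using assms(1) by (intro finite_ordLess_infinite) (auto simp: Field_card_of card_of_well_order_on)
  then have "(card_of ({c} \<union> A), card_of (UNIV :: 'a set)) \<in> ordLess"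
    using assms by (intro card_of_Un_ordLess_infinite) (auto simp: small_in_def)
  then show ?thesis
    by (simp add: small_in_def)
qed

lemma small_Un_finite:
  assumes "infinite (UNIV :: 'a set)" and "small_in (A :: 'a set)" and "finite F"
  shows "small_in (A \<union> F)"
  using assms(3) by induction (simp_all add: assms(2) small_insert[OF assms(1)])

definition fix_var :: "nat \<Rightarrow> 'a \<Rightarrow> fm \<times> (nat \<Rightarrow> 'a) \<Rightarrow> fm \<times> (nat \<Rightarrow> 'a)" where
  "fix_var n c p = (fst p, (snd p)(n := c))"

lemma override_on_upd_last:
  "override_on (e(Suc k := c)) b {1..k} = override_on e (b(Suc k := c)) {1..Suc k}"
  by (auto simp: override_on_def fun_eq_iff)

lemma realises_fix_var:
  "realises M k b (fix_var (Suc k) c ` \<Gamma>) \<longleftrightarrow> realises M (Suc k) (b(Suc k := c)) \<Gamma>"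
  by (auto simp del: One_nat_def simp: realises_def fix_var_def override_on_upd_last)

lemma params_in_fix_var:
  "params_in A (Suc k) \<Gamma> \<Longrightarrow> params_in (insert c A) k (fix_var (Suc k) c ` \<Gamma>)"
  unfolding params_in_def fix_var_def by (fastforce simp del: One_nat_def)

text \<open>\<open>\<exists>x\<^sub>1 \<dots> x\<^sub>k. \<Psi>\<close>, with the remaining variable \<open>x\<^sub>k\<^sub>+\<^sub>1\<close> moved to the variable 0 that
  \<open>saturated\<close> uses for 1-types.\<close>
definition last_projection :: "nat \<Rightarrow> fm \<times> (nat \<Rightarrow> 'a) \<Rightarrow> fm \<times> (nat \<Rightarrow> 'a)" where
  "last_projection k p =
     (rename (transpose 0 (Suc k)) (Exs [1..<Suc k] (fst p)), snd p \<circ> transpose 0 (Suc k))"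

lemma sat_last_projection:
  "sat M UNIV ((snd (last_projection k p))(0 := c)) (fst (last_projection k p)) \<longleftrightarrow>
     (\<exists>b. realises M (Suc k) (b(Suc k := c)) {p})"
proof -
  obtain \<Psi> E where p: "p = (\<Psi>, E)"
    by (cases p)
  have "(E \<circ> transpose 0 (Suc k))(0 := c) \<circ> transpose 0 (Suc k) = E(Suc k := c)"
    by (auto simp: fun_eq_iff transpose_def)
  moreover have "set [1..<Suc k] = {1..k}"
    by auto
  ultimately have "sat M UNIV ((snd (last_projection k p))(0 := c)) (fst (last_projection k p)) \<longleftrightarrow>
      (\<exists>b. sat M UNIV (override_on (E(Suc k := c)) b {1..k}) \<Psi>)"
    by (simp del: One_nat_def add: p last_projection_def sat_rename inj_transpose sat_Exs)
  then show ?thesis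
    by (simp del: One_nat_def add: p realises_def override_on_upd_last)
qed

lemma params_last_projection:
  assumes "params_in A (Suc k) {p}" and "n \<in> fv (fst (last_projection k p))" and "n \<noteq> 0"
  shows "snd (last_projection k p) n \<in> A"
proof -
  have "set [1..<Suc k] = {1..k}"
    by auto
  then have "n \<in> transpose 0 (Suc k) ` (fv (fst p) - {1..k})"
    using assms(2) by (simp add: last_projection_def fv_rename inj_transpose fv_Exs)
  then obtain m where m: "m \<in> fv (fst p)" "m \<notin> {1..k}" "n = transpose 0 (Suc k) m"
    by blast
  moreover have "m \<noteq> Suc k"
    using m(3) assms(3) by auto
  ultimately have "m \<notin> {1..Suc k}"
    by auto
  moreover have "snd (last_projection k p) n = snd p m"
    using m(3) by (simp add: last_projection_def)
  ultimately show ?thesis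
    using assms(1) m(1) by (auto simp del: One_nat_def simp: params_in_def)
qed

definition last_projections :: "nat \<Rightarrow> (fm \<times> (nat \<Rightarrow> 'a)) set \<Rightarrow> (fm \<times> (nat \<Rightarrow> 'a)) set" where
  "last_projections k \<Gamma> = (\<lambda>ps. last_projection k (conj_list (Suc k) ps)) ` {ps. set ps \<subseteq> \<Gamma>}"

lemma params_last_projections:
  assumes "params_in A (Suc k) \<Gamma>" and "q \<in> last_projections k \<Gamma>" and "n \<in> fv (fst q)" and "n \<noteq> 0"
  shows "snd q n \<in> A"
proof -
  obtain ps where ps: "set ps \<subseteq> \<Gamma>" "q = last_projection k (conj_list (Suc k) ps)"
    using assms(2) by (auto simp: last_projections_def)
  have "params_in A (Suc k) (set ps)"
    using params_in_mono[OF assms(1) ps(1)] .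
  then show ?thesis
    using assms(3,4) ps(2) by (simp add: params_last_projection params_in_conj_list)
qed

lemma last_projections_finitely_satisfiable:
  assumes "finitely_realisable M (Suc k) \<Gamma>" and "G \<subseteq> last_projections k \<Gamma>" and "finite G"
  shows "\<exists>c. \<forall>q \<in> G. sat M UNIV ((snd q)(0 := c)) (fst q)"
proof -
  obtain L where L: "L \<subseteq> {ps. set ps \<subseteq> \<Gamma>}" "finite L"
      "G = (\<lambda>ps. last_projection k (conj_list (Suc k) ps)) ` L"
    using finite_subset_image[OF assms(3) assms(2)[unfolded last_projections_def]] by blast
  then have "\<Union> (set ` L) \<subseteq> \<Gamma>" "finite (\<Union> (set ` L))"
    by auto
  then obtain b where b: "realises M (Suc k) b (\<Union> (set ` L))"
    using assms(1) unfolding finitely_realisable_def by blast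
  have "sat M UNIV ((snd q)(0 := b (Suc k))) (fst q)" if "q \<in> G" for q
  proof -
    obtain ps where ps: "ps \<in> L" "q = last_projection k (conj_list (Suc k) ps)"
      using \<open>q \<in> G\<close> L(3) by blast
    then have "realises M (Suc k) (b(Suc k := b (Suc k))) {conj_list (Suc k) ps}"
      using realises_mono[OF b] by (auto simp: realises_conj_list)
    then show ?thesis
      unfolding ps(2) sat_last_projection by blast
  qed
  then show ?thesis
    by blast
qed

lemma finitely_realisable_fix_var:
  assumes "\<forall>q \<in> last_projections k \<Gamma>. sat M UNIV ((snd q)(0 := c)) (fst q)"
  shows "finitely_realisable M k (fix_var (Suc k) c ` \<Gamma>)"
  unfolding finitely_realisable_def
proof (intro allI impI)
  fix F'
  assume F': "F' \<subseteq> fix_var (Suc k) c ` \<Gamma>" "finite F'"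
  obtain F where F: "F \<subseteq> \<Gamma>" "F' = fix_var (Suc k) c ` F" "finite F"
    using finite_subset_image[OF F'(2,1)] by blast
  then obtain ps where "set ps = F"
    using finite_list by blast
  then have "last_projection k (conj_list (Suc k) ps) \<in> last_projections k \<Gamma>"
    using F(1) by (auto simp: last_projections_def)
  then have "sat M UNIV ((snd (last_projection k (conj_list (Suc k) ps)))(0 := c))
      (fst (last_projection k (conj_list (Suc k) ps)))"
    using assms by blast
  then obtain b where "realises M (Suc k) (b(Suc k := c)) {conj_list (Suc k) ps}"
    unfolding sat_last_projection by blast
  then show "\<exists>b. realises M k b F'"
    using \<open>set ps = F\<close> by (auto simp: realises_conj_list realises_fix_var F(2))
qed

lemma saturated_fix_last_var:
  assumes "saturated M" and "small_in A"
    and "params_in A (Suc k) \<Gamma>" and "finitely_realisable M (Suc k) \<Gamma>"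
  obtains c where "finitely_realisable M k (fix_var (Suc k) c ` \<Gamma>)"
proof -
  have "\<forall>(\<phi>, e) \<in> last_projections k \<Gamma>. \<forall>n \<in> fv \<phi> - {0}. e n \<in> A"
    using params_last_projections[OF assms(3)] by fastforce
  moreover have "\<forall>G \<subseteq> last_projections k \<Gamma>. finite G \<longrightarrow>
      (\<exists>c. \<forall>(\<phi>, e) \<in> G. sat M UNIV (e(0 := c)) \<phi>)"
    using last_projections_finitely_satisfiable[OF assms(4)] by (simp add: case_prod_beta)
  ultimately have "\<exists>c. \<forall>(\<phi>, e) \<in> last_projections k \<Gamma>. sat M UNIV (e(0 := c)) \<phi>"
    using assms(2) by (intro assms(1)[unfolded saturated_def, rule_format]) blast
  then obtain c where "\<forall>q \<in> last_projections k \<Gamma>. sat M UNIV ((snd q)(0 := c)) (fst q)"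
    by (auto simp: case_prod_beta)
  then show thesis
    by (intro that finitely_realisable_fix_var)
qed

lemma saturated_realises:
  assumes "saturated M" and "infinite (UNIV :: 'a set)"
    and "small_in (A :: 'a set)" and "params_in A k \<Gamma>" and "finitely_realisable M k \<Gamma>"
  shows "\<exists>b. realises M k b \<Gamma>"
  using assms(3-5)
proof (induction k arbitrary: A \<Gamma>)
  case 0
  have "\<exists>b. realises M 0 b {p}" if "p \<in> \<Gamma>" for p
    using "0.prems"(3) that unfolding finitely_realisable_def by blast
  then show ?case
    by (fastforce simp: realises_def)
next
  case (Suc k)
  obtain c where "finitely_realisable M k (fix_var (Suc k) c ` \<Gamma>)"
    using saturated_fix_last_var[OF assms(1) Suc.prems] by blast
  moreover have "small_in (insert c A)" "params_in (insert c A) k (fix_var (Suc k) c ` \<Gamma>)"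
    using small_insert[OF assms(2) Suc.prems(1)] params_in_fix_var[OF Suc.prems(2)] by auto
  ultimately obtain b where "realises M k b (fix_var (Suc k) c ` \<Gamma>)"
    using Suc.IH by blast
  then show ?case
    by (auto simp: realises_fix_var)
qed

section \<open>Disjoint conjugates\<close>

lemma elem_sub_witness:
  assumes "elem_sub M S" and "\<forall>n \<in> fv \<chi> - {0}. E n \<in> S" and "sat M UNIV E (Ex 0 \<chi>)"
  shows "\<exists>s \<in> S. sat M UNIV (E(0 := s)) \<chi>"
proof -
  have S: "pzero M \<in> S" "\<And>\<phi> e. range e \<subseteq> S \<Longrightarrow> sat M S e \<phi> \<longleftrightarrow> sat M UNIV e \<phi>"
    using assms(1) by (auto simp: elem_sub_def)
  define E' where "E' = (\<lambda>n. if n \<in> fv (Ex 0 \<chi>) then E n else pzero M)"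
  have E'_S: "range E' \<subseteq> S"
    using assms(2) S(1) by (auto simp: E'_def)
  have agree: "sat M D (E'(0 := s)) \<chi> \<longleftrightarrow> sat M D (E(0 := s)) \<chi>" for D s
    by (rule sat_cong) (simp add: E'_def)
  have "sat M UNIV E' (Ex 0 \<chi>)"
    using assms(3) agree by simp
  then have "sat M S E' (Ex 0 \<chi>)"
    using S(2)[OF E'_S] by blast
  then obtain s where "s \<in> S" "sat M S (E'(0 := s)) \<chi>"
    by auto
  moreover have "range (E'(0 := s)) \<subseteq> S"
    using E'_S \<open>s \<in> S\<close> by auto
  ultimately show ?thesis
    using S(2) agree by blast
qed

lemma elem_sub_definable_least:
  assumes "presburger_model M" and "elem_sub M S" and "\<forall>n \<in> fv \<theta> - {0}. E n \<in> S"
    and "sat M UNIV (E(0 := z)) \<theta>" and "\<forall>z. sat M UNIV (E(0 := z)) \<theta> \<longrightarrow> ple M l z"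
  obtains s where "s \<in> S" and "sat M UNIV (E(0 := s)) \<theta>"
    and "\<forall>z. sat M UNIV (E(0 := z)) \<theta> \<longrightarrow> ple M s z"
proof -
  have "\<forall>z. sat M UNIV (E(0 := z)) \<theta> \<longrightarrow> ple_dir M True l z"
    using assms(5) by (simp add: ple_dir_def)
  then obtain z' where "sat M UNIV (E(0 := z')) (extremum_fm True \<theta>)"
    using definable_extremum_exists[OF assms(1,4)] by blast
  then have "sat M UNIV E (Ex 0 (extremum_fm True \<theta>))"
    by auto
  moreover have "\<forall>n \<in> fv (extremum_fm True \<theta>) - {0}. E n \<in> S"
    using fv_extremum_fm[of True \<theta>] assms(3) by auto
  ultimately obtain s where "s \<in> S" "sat M UNIV (E(0 := s)) (extremum_fm True \<theta>)"
    using elem_sub_witness[OF assms(2)] by blast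
  then show thesis
    by (intro that) (auto simp: sat_extremum_fm ple_dir_def)
qed

fun num_trm :: "nat \<Rightarrow> trm" where
  "num_trm 0 = Zero"
| "num_trm (Suc c) = Plus One (num_trm c)"

lemma tval_num_trm: "tval M e (num_trm c) = num_elem M c"
  by (induction c) (simp_all add: num_elem_def)

lemma fvt_num_trm: "fvt (num_trm c) = {}"
  by (induction c) simp_all

lemma point_or_cell_shape:
  assumes "presburger_model M"
    and "(\<exists>p. defset M \<phi> a = {p}) \<or> bounded_1cell M (defset M \<phi> a)"
  obtains \<alpha> \<beta> C m where "fv C \<subseteq> {0}"
    and "defset M \<phi> a = {x. ple M \<alpha> x \<and> ple M x \<beta> \<and> sat M UNIV (a(0 := x)) C}"
    and "m \<in> defset M \<phi> a" and "\<forall>x \<in> defset M \<phi> a. ple M x m"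
  using assms(2)
proof
  assume "\<exists>p. defset M \<phi> a = {p}"
  then obtain p where p: "defset M \<phi> a = {p}"
    by blast
  then have "defset M \<phi> a = {x. ple M p x \<and> ple M x p \<and> sat M UNIV (a(0 := x)) FTrue}"
    using ple_antisym[OF assms(1)] ple_refl[of M p] by auto
  then show thesis
    using p ple_refl[of M p] by (intro that[of FTrue p p p]) auto
next
  assume "bounded_1cell M (defset M \<phi> a)"
  then obtain \<alpha> \<beta> N c where "defset M \<phi> a \<noteq> {}"
    and X: "defset M \<phi> a = {x. ple M \<alpha> x \<and> ple M x \<beta> \<and> pcong M N x (num_elem M c)}"
    unfolding bounded_1cell_def by fastforce
  then obtain x where "sat M UNIV (a(0 := x)) \<phi>"
    by (auto simp: defset_def)
  moreover have "\<forall>z. sat M UNIV (a(0 := z)) \<phi> \<longrightarrow> ple_dir M False \<beta> z"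
    using X by (auto simp: defset_def ple_dir_def)
  ultimately obtain m where "sat M UNIV (a(0 := m)) (extremum_fm False \<phi>)"
    using definable_extremum_exists[OF assms(1)] by blast
  then have "m \<in> defset M \<phi> a" "\<forall>x \<in> defset M \<phi> a. ple M x m"
    by (auto simp: sat_extremum_fm defset_def ple_dir_def)
  moreover have "defset M \<phi> a =
      {x. ple M \<alpha> x \<and> ple M x \<beta> \<and> sat M UNIV (a(0 := x)) (Cong N (Var 0) (num_trm c))}"
    using X by (simp add: tval_num_trm)
  ultimately show thesis
    by (intro that[of "Cong N (Var 0) (num_trm c)"]) (simp_all add: fvt_num_trm)
qed

definition type_over :: "'a pstruct \<Rightarrow> 'a set \<Rightarrow> nat \<Rightarrow> (nat \<Rightarrow> 'a) \<Rightarrow> (fm \<times> (nat \<Rightarrow> 'a)) set" where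
  "type_over M S k a =
     {(\<psi>, e). (\<forall>n \<in> fv \<psi> - {1..k}. e n \<in> S) \<and> sat M UNIV (override_on e a {1..k}) \<psi>}"

lemma params_in_type_over: "params_in S k (type_over M S k a)"
  by (auto simp: params_in_def type_over_def)

lemma realises_type_over: "realises M k a (type_over M S k a)"
  by (auto simp: realises_def type_over_def)

lemma same_type_if_realises_type_over:
  assumes "realises M k b (type_over M S k a)"
  shows "same_type M S k a b"
  unfolding same_type_def
proof (intro allI impI)
  fix \<psi> e
  assume params: "\<forall>n \<in> fv \<psi> - {1..k}. e n \<in> S"
  have "sat M UNIV (override_on e b {1..k}) \<chi>"
    if "fv \<chi> = fv \<psi>" and "sat M UNIV (override_on e a {1..k}) \<chi>" for \<chi>
  proof -
    have "{(\<chi>, e)} \<subseteq> type_over M S k a"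
      using that params by (simp add: type_over_def)
    from realises_mono[OF assms this] show ?thesis
      by simp
  qed
  from this[of \<psi>] this[of "Not \<psi>"]
  show "sat M UNIV (override_on e a {1..k}) \<psi> \<longleftrightarrow> sat M UNIV (override_on e b {1..k}) \<psi>"
    by auto
qed

text \<open>The second copy of \<open>\<phi>\<close> reads its parameters from the variables \<open>k+1..2k\<close>, which the assignment
  \<open>\<lambda>n. a (n - k)\<close> fills with \<open>a\<close>.\<close>
definition disjointness_fm :: "nat \<Rightarrow> fm \<Rightarrow> fm" where
  "disjointness_fm k \<phi> = Not (Ex 0 (And \<phi> (rename (\<lambda>n. if n = 0 then 0 else n + k) \<phi>)))"

lemma inj_shift_params: "inj (\<lambda>n::nat. if n = 0 then 0 else n + k)"
  by (auto simp: inj_def)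

lemma sat_disjointness_fm:
  assumes "fv \<phi> \<subseteq> {0..k}"
  shows "sat M UNIV (override_on (\<lambda>n. a (n - k)) b {1..k}) (disjointness_fm k \<phi>) \<longleftrightarrow>
    defset M \<phi> b \<inter> defset M \<phi> a = {}"
proof -
  let ?e = "override_on (\<lambda>n. a (n - k)) b {1..k}"
  have "sat M UNIV (?e(0 := x)) \<phi> \<longleftrightarrow> sat M UNIV (b(0 := x)) \<phi>" for x
    by (rule sat_cong) (use assms in \<open>auto simp: override_on_def\<close>)
  moreover have "sat M UNIV (?e(0 := x) \<circ> (\<lambda>n. if n = 0 then 0 else n + k)) \<phi> \<longleftrightarrow>
      sat M UNIV (a(0 := x)) \<phi>" for x
    by (rule sat_cong) (use assms in \<open>auto simp: override_on_def\<close>)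
  ultimately show ?thesis
    by (auto simp: disjointness_fm_def sat_rename[OF inj_shift_params] defset_def)
qed

lemma params_disjointness_fm:
  assumes "fv \<phi> \<subseteq> {0..k}" and "n \<in> fv (disjointness_fm k \<phi>) - {1..k}"
  shows "a (n - k) \<in> a ` {1..k}"
proof -
  obtain j where "j \<in> fv \<phi>" "j \<noteq> 0" "n = j + k"
    using assms by (auto simp: disjointness_fm_def fv_rename[OF inj_shift_params] split: if_splits)
  then show ?thesis
    using assms(1) by auto
qed

definition bounding_fm :: "nat \<Rightarrow> fm \<Rightarrow> fm \<Rightarrow> fm \<Rightarrow> fm" where
  "bounding_fm k \<phi> C \<Psi> = (let v = fresh_var k \<Psi> in
     And C (Exs [1..<Suc k] (And \<Psi> (All v (Imp (rename (transpose 0 v) \<phi>) (Le (Var v) (Var 0)))))))"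

lemma sat_bounding_fm:
  assumes "fv \<phi> \<subseteq> {0..k}" and "0 \<notin> fv \<Psi>"
  shows "sat M UNIV (E(0 := z)) (bounding_fm k \<phi> C \<Psi>) \<longleftrightarrow> sat M UNIV (E(0 := z)) C \<and>
    (\<exists>b. sat M UNIV (override_on E b {1..k}) \<Psi> \<and> (\<forall>w \<in> defset M \<phi> b. ple M w z))"
proof -
  define v where "v = fresh_var k \<Psi>"
  have v: "k < v" "v \<notin> fv \<Psi>"
    using fresh_var_gt fresh_var_notin by (auto simp: v_def)
  let ?e = "\<lambda>b. override_on (E(0 := z)) b {1..k}"
  have "sat M UNIV (?e b) \<Psi> \<longleftrightarrow> sat M UNIV (override_on E b {1..k}) \<Psi>" for b
    by (rule sat_cong) (use assms(2) in \<open>auto simp: override_on_def\<close>)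
  moreover have "sat M UNIV ((?e b)(v := w) \<circ> transpose 0 v) \<phi> \<longleftrightarrow> sat M UNIV (b(0 := w)) \<phi>" for b w
    by (rule sat_cong) (use assms(1) v(1) in \<open>auto simp: override_on_def transpose_def\<close>)
  moreover have "((?e b)(v := w)) 0 = z" for b w
    using v(1) by simp
  moreover have "set [1..<Suc k] = {1..k}"
    by auto
  ultimately show ?thesis
    using v(1) by (simp del: One_nat_def add: bounding_fm_def Let_def v_def[symmetric] sat_Exs
        sat_rename inj_transpose defset_def)
qed

lemma fv_bounding_fm:
  assumes "fv \<phi> \<subseteq> {0..k}" and "fv C \<subseteq> {0}"
  shows "fv (bounding_fm k \<phi> C \<Psi>) \<subseteq> insert 0 (fv \<Psi> - {1..k})"
proof -
  define v where "v = fresh_var k \<Psi>"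
  have "k < v"
    using fresh_var_gt by (simp add: v_def)
  then have "fv (rename (transpose 0 v) \<phi>) \<subseteq> insert v {1..k}"
    using assms(1) by (auto simp: fv_rename inj_transpose transpose_def)
  then show ?thesis
    using assms(2) by (auto simp: bounding_fm_def Let_def v_def[symmetric] fv_Exs)
qed

lemma disjoint_realisation_exists:
  assumes pm: "presburger_model M" and S: "elem_sub M S" "defset M \<phi> a \<inter> S = {}"
    and \<phi>: "fv \<phi> \<subseteq> {0..k}" and C: "fv C \<subseteq> {0}"
    and X: "defset M \<phi> a = {x. ple M \<alpha> x \<and> ple M x \<beta> \<and> sat M UNIV (a(0 := x)) C}"
    and m: "m \<in> defset M \<phi> a" "\<forall>x \<in> defset M \<phi> a. ple M x m"
    and \<Psi>: "0 \<notin> fv \<Psi>" "params_in S k {(\<Psi>, E)}" "sat M UNIV (override_on E a {1..k}) \<Psi>"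
  shows "\<exists>b. sat M UNIV (override_on E b {1..k}) \<Psi> \<and> defset M \<phi> b \<inter> defset M \<phi> a = {}"
proof (rule ccontr)
  assume "\<not> ?thesis"
  then have meets: "\<exists>x. x \<in> defset M \<phi> b \<and> x \<in> defset M \<phi> a"
    if "sat M UNIV (override_on E b {1..k}) \<Psi>" for b
    using that by blast
  define \<theta> where "\<theta> = bounding_fm k \<phi> C \<Psi>"
  have "sat M UNIV (E(0 := x)) C \<longleftrightarrow> sat M UNIV (a(0 := x)) C" for x
    by (rule sat_cong) (use C in auto)
  then have \<theta>: "sat M UNIV (E(0 := z)) \<theta> \<longleftrightarrow> sat M UNIV (a(0 := z)) C \<and>
      (\<exists>b. sat M UNIV (override_on E b {1..k}) \<Psi> \<and> (\<forall>w \<in> defset M \<phi> b. ple M w z))" for z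
    by (simp only: \<theta>_def sat_bounding_fm[OF \<phi> \<Psi>(1)])
  have m_X: "ple M \<alpha> m" "ple M m \<beta>" "sat M UNIV (a(0 := m)) C"
    using m(1) unfolding X by blast+
  then have \<theta>_m: "sat M UNIV (E(0 := m)) \<theta>"
    unfolding \<theta> using \<Psi>(3) m(2) by blast
  have lower: "ple M \<alpha> z" if z: "sat M UNIV (E(0 := z)) \<theta>" for z
  proof -
    obtain b where b: "sat M UNIV (override_on E b {1..k}) \<Psi>" "\<forall>w \<in> defset M \<phi> b. ple M w z"
      using z unfolding \<theta> by blast
    then obtain x where "x \<in> defset M \<phi> b" "x \<in> defset M \<phi> a"
      using meets by blast
    then have "ple M \<alpha> x" "ple M x z"
      using b(2) unfolding X by blast+
    then show ?thesis
      by (rule ple_trans[OF pm])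
  qed
  have "\<forall>n \<in> fv \<theta> - {0}. E n \<in> S"
    using fv_bounding_fm[OF \<phi> C, of \<Psi>] \<Psi>(2) by (auto simp: \<theta>_def params_in_def)
  then obtain s where "s \<in> S" "sat M UNIV (E(0 := s)) \<theta>" "ple M s m"
    using elem_sub_definable_least[OF pm S(1) _ \<theta>_m] lower \<theta>_m by blast
  then have "ple M \<alpha> s" "ple M s \<beta>" "sat M UNIV (a(0 := s)) C"
    using lower[of s] ple_trans[OF pm _ m_X(2)] unfolding \<theta> by auto
  then have "s \<in> defset M \<phi> a"
    unfolding X by blast
  then show False
    using S(2) \<open>s \<in> S\<close> by blast
qed

lemma type_part_disjoint_realisation:
  assumes "presburger_model M" and "elem_sub M S" and "defset M \<phi> a \<inter> S = {}"
    and "fv \<phi> \<subseteq> {0..k}" and "fv C \<subseteq> {0}"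
    and "defset M \<phi> a = {x. ple M \<alpha> x \<and> ple M x \<beta> \<and> sat M UNIV (a(0 := x)) C}"
    and "m \<in> defset M \<phi> a" and "\<forall>x \<in> defset M \<phi> a. ple M x m"
    and sub: "set ps \<subseteq> type_over M S k a"
  shows "\<exists>b. realises M k b (set ps) \<and> defset M \<phi> b \<inter> defset M \<phi> a = {}"
proof -
  obtain \<Psi> E where \<Psi>E: "conj_list k ps = (\<Psi>, E)"
    by (cases "conj_list k ps") simp
  have "0 \<notin> fv \<Psi>"
    using zero_notin_fv_conj_list[of k ps] \<Psi>E by simp
  moreover have "params_in S k {(\<Psi>, E)}"
    using params_in_conj_list[OF params_in_mono[OF params_in_type_over sub]] \<Psi>E by simp
  moreover have "realises M k a {(\<Psi>, E)}"
    using realises_mono[OF realises_type_over sub] realises_conj_list[of M k a ps, unfolded \<Psi>E]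
    by blast
  then have "sat M UNIV (override_on E a {1..k}) \<Psi>"
    by (simp del: One_nat_def)
  ultimately obtain b where b: "sat M UNIV (override_on E b {1..k}) \<Psi>"
      "defset M \<phi> b \<inter> defset M \<phi> a = {}"
    using disjoint_realisation_exists[OF assms(1-8)] by blast
  from b(1) have "realises M k b {(\<Psi>, E)}"
    by (simp del: One_nat_def)
  then show ?thesis
    using b(2) realises_conj_list[of M k b ps, unfolded \<Psi>E] by blast
qed

lemma type_with_disjointness_finitely_realisable:
  assumes "presburger_model M" and "elem_sub M S" and "fv \<phi> \<subseteq> {0..k}"
    and "(\<exists>p. defset M \<phi> a = {p}) \<or> bounded_1cell M (defset M \<phi> a)"
    and "defset M \<phi> a \<inter> S = {}"
  shows "finitely_realisable M k (insert (disjointness_fm k \<phi>, \<lambda>n. a (n - k)) (type_over M S k a))"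
  unfolding finitely_realisable_def
proof (intro allI impI)
  fix F
  assume F: "F \<subseteq> insert (disjointness_fm k \<phi>, \<lambda>n. a (n - k)) (type_over M S k a)" "finite F"
  obtain \<alpha> \<beta> C m where shape: "fv C \<subseteq> {0}"
    "defset M \<phi> a = {x. ple M \<alpha> x \<and> ple M x \<beta> \<and> sat M UNIV (a(0 := x)) C}"
    "m \<in> defset M \<phi> a" "\<forall>x \<in> defset M \<phi> a. ple M x m"
    by (rule point_or_cell_shape[OF assms(1,4)])
  have "finite (F - {(disjointness_fm k \<phi>, \<lambda>n. a (n - k))})"
    using F(2) by simp
  then obtain ps where ps: "set ps = F - {(disjointness_fm k \<phi>, \<lambda>n. a (n - k))}"
    using finite_list by blast
  then have "set ps \<subseteq> type_over M S k a"
    using F(1) by blast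
  then obtain b where b: "realises M k b (set ps)" "defset M \<phi> b \<inter> defset M \<phi> a = {}"
    using type_part_disjoint_realisation[OF assms(1,2,5,3) shape] by blast
  have "sat M UNIV (override_on (\<lambda>n. a (n - k)) b {1..k}) (disjointness_fm k \<phi>)"
    using b(2) sat_disjointness_fm[OF assms(3), of M a b] by blast
  with b(1) have "realises M k b (insert (disjointness_fm k \<phi>, \<lambda>n. a (n - k)) (set ps))"
    by (simp del: One_nat_def)
  moreover have "F \<subseteq> insert (disjointness_fm k \<phi>, \<lambda>n. a (n - k)) (set ps)"
    using ps by blast
  ultimately show "\<exists>b. realises M k b F"
    using realises_mono by blast
qed

theorem lemma4p6:
  fixes M :: "'a pstruct" and S :: "'a set" and \<phi> :: fm and k :: nat and a :: "nat \<Rightarrow> 'a"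
  assumes "presburger_model M"
    and "saturated M"
    and "elem_sub M S"
    and "small_in S"
    and "fv \<phi> \<subseteq> {0..k}"
    and "(\<exists>p. defset M \<phi> a = {p}) \<or> bounded_1cell M (defset M \<phi> a)"
    and "defset M \<phi> a \<inter> S = {}"
  shows "\<exists>a'. same_type M S k a a' \<and> defset M \<phi> a \<inter> defset M \<phi> a' = {}"
proof -
  define \<Gamma> where "\<Gamma> = insert (disjointness_fm k \<phi>, \<lambda>n. a (n - k)) (type_over M S k a)"
  have infinite: "infinite (UNIV :: 'a set)"
    using presburger_model_infinite[OF assms(1)] .
  have "small_in (S \<union> a ` {1..k})"
    using small_Un_finite[OF infinite assms(4)] by simp
  moreover have "params_in (S \<union> a ` {1..k}) k \<Gamma>"
    using params_in_type_over params_disjointness_fm[OF assms(5)]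
    by (fastforce simp: \<Gamma>_def params_in_def)
  moreover have "finitely_realisable M k \<Gamma>"
    unfolding \<Gamma>_def using type_with_disjointness_finitely_realisable[OF assms(1,3,5,6,7)] .
  ultimately obtain b where b: "realises M k b \<Gamma>"
    using saturated_realises[OF assms(2) infinite] by blast
  then have "same_type M S k a b"
    by (intro same_type_if_realises_type_over realises_mono[OF b]) (auto simp: \<Gamma>_def)
  moreover have "defset M \<phi> b \<inter> defset M \<phi> a = {}"
    using b sat_disjointness_fm[OF assms(5), of M a b] by (simp del: One_nat_def add: \<Gamma>_def)
  ultimately show ?thesis
    by blast
qed

end
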